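(* Let $a,p,b,q$ be the vertices of a convex quadrilateral in the plane, appearing in this order along its boundary. If $|pa|=|pb|$ and $\angle aqb\geqslant 2\pi/3$, then $|pq|\leqslant \frac{2}{\sqrt{3}}\,|pa|$.
   Context: $|xy|$ denotes the Euclidean distance between points $x$ and $y$; $\angle aqb$ is the angle at $q$ between segments $qa$ and $qb$. *)

theory Defs
  imports "HOL-Analysis.Analysis"
begin

definition cross2 :: "real^2 \<Rightarrow> real^2 \<Rightarrow> real" where
  "cross2 u v = u$1 * v$2 - u$2 * v$1"

definition angle_at :: "real^2 \<Rightarrow> real^2 \<Rightarrow> real^2 \<Rightarrow> real" where
  "angle_at a q b = arccos (((a - q) \<bullet> (b - q)) / (norm (a - q) * norm (b - q)))"

text \<open>a, b, c, d are the vertices of a (non-degenerate) convex quadrilateral,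
  listed in this order along its boundary: all consecutive turns are strictly
  in the same direction.\<close>
definition convex_quad :: "real^2 \<Rightarrow> real^2 \<Rightarrow> real^2 \<Rightarrow> real^2 \<Rightarrow> bool" where
  "convex_quad a b c d \<longleftrightarrow>
     (cross2 (b - a) (c - b) > 0 \<and> cross2 (c - b) (d - c) > 0 \<and>
      cross2 (d - c) (a - d) > 0 \<and> cross2 (a - d) (b - a) > 0) \<or>
     (cross2 (b - a) (c - b) < 0 \<and> cross2 (c - b) (d - c) < 0 \<and>
      cross2 (d - c) (a - d) < 0 \<and> cross2 (a - d) (b - a) < 0)"

end

theory Submission
  imports Defs
begin

text \<open>Ptolemy's inequality for the four points gives
  \<open>|pq| |ab| \<le> |pa| |qb| + |pb| |qa| = |pa| (|qa| + |qb|)\<close>. By the law of cosines, an angle of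
  at least \<open>2\<pi>/3\<close> at \<open>q\<close> forces \<open>|ab|\<^sup>2 \<ge> |qa|\<^sup>2 + |qb|\<^sup>2 + |qa| |qb| \<ge> 3/4 (|qa| + |qb|)\<^sup>2\<close>,
  and dividing by \<open>|ab|\<close> yields the bound.\<close>

lemma ptolemy_inequality_complex:
  fixes p q a b :: complex
  shows "dist p q * dist a b \<le> dist p a * dist q b + dist p b * dist q a"
proof -
  have "(p - q) * (a - b) = (p - a) * (q - b) + (p - b) * (a - q)"
    by (simp add: algebra_simps)
  then have "norm ((p - q) * (a - b)) \<le> norm ((p - a) * (q - b)) + norm ((p - b) * (a - q))"
    by (metis norm_triangle_ineq)
  then show ?thesis
    by (simp add: norm_mult dist_norm norm_minus_commute)
qed

definition complex_of_vec2 :: "real^2 \<Rightarrow> complex" where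
  "complex_of_vec2 x = Complex (x$1) (x$2)"

lemma dist_complex_of_vec2: "dist (complex_of_vec2 x) (complex_of_vec2 y) = dist x y"
  by (simp add: dist_norm complex_of_vec2_def norm_vec_def L2_set_def sum_2 cmod_def)

lemma ptolemy_inequality:
  fixes p q a b :: "real^2"
  shows "dist p q * dist a b \<le> dist p a * dist q b + dist p b * dist q a"
  using ptolemy_inequality_complex[of "complex_of_vec2 p" "complex_of_vec2 q"
      "complex_of_vec2 a" "complex_of_vec2 b"]
  by (simp add: dist_complex_of_vec2)

lemma inner_le_neg_half_if_arccos_ge:
  fixes u v :: "'a::real_inner"
  assumes "arccos ((u \<bullet> v) / (norm u * norm v)) \<ge> 2 * pi / 3"
  shows "u \<noteq> 0" and "v \<noteq> 0" and "u \<bullet> v \<le> - (norm u * norm v) / 2"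
proof -
  define c where "c = (u \<bullet> v) / (norm u * norm v)"
  have "c \<noteq> 0"
    using assms pi_gt_zero by (auto simp: c_def)
  then show u: "u \<noteq> 0" and v: "v \<noteq> 0"
    by (auto simp: c_def)
  have "\<bar>c\<bar> \<le> 1"
    using Cauchy_Schwarz_ineq2[of u v] u v by (simp add: c_def abs_divide divide_le_eq_1)
  moreover have "arccos (- (1 / 2)) \<le> arccos c"
    using assms by (simp add: c_def)
  ultimately have "c \<le> - (1 / 2)"
    using arccos_le_mono[of "- (1 / 2)" c] by auto
  then show "u \<bullet> v \<le> - (norm u * norm v) / 2"
    using u v by (simp add: c_def divide_le_eq)
qed

lemma sqrt3_sum_norms_le_twice_norm_diff:
  fixes u v :: "'a::real_inner"
  assumes "u \<bullet> v \<le> - (norm u * norm v) / 2"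
  shows "sqrt 3 * (norm u + norm v) \<le> 2 * norm (u - v)"
proof (rule power2_le_imp_le)
  have "(norm (u - v))\<^sup>2 = (norm u)\<^sup>2 + (norm v)\<^sup>2 - 2 * (u \<bullet> v)"
    by (simp add: power2_norm_eq_inner inner_diff_left inner_diff_right inner_commute)
  moreover have "0 \<le> (norm u - norm v)\<^sup>2"
    by simp
  ultimately show "(sqrt 3 * (norm u + norm v))\<^sup>2 \<le> (2 * norm (u - v))\<^sup>2"
    using assms by (simp add: power_mult_distrib power2_eq_square algebra_simps)
qed simp

theorem lemma2:
  fixes a p b q :: "real^2"
  assumes "convex_quad a p b q"
    and "dist p a = dist p b"
    and "angle_at a q b \<ge> 2 * pi / 3"
  shows "dist p q \<le> 2 / sqrt 3 * dist p a"
proof -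
  have angle: "arccos (((a - q) \<bullet> (b - q)) / (norm (a - q) * norm (b - q))) \<ge> 2 * pi / 3"
    using assms(3) by (simp add: angle_at_def)
  have wide: "sqrt 3 * (dist q a + dist q b) \<le> 2 * dist a b"
    using sqrt3_sum_norms_le_twice_norm_diff[OF inner_le_neg_half_if_arccos_ge(3)[OF angle]]
    by (simp add: dist_norm norm_minus_commute)
  have "dist q a > 0"
    using inner_le_neg_half_if_arccos_ge(1)[OF angle] by simp
  with wide have ab: "dist a b > 0"
    by (smt (verit) real_sqrt_gt_zero zero_le_dist mult_pos_pos)
  have "dist p q * dist a b \<le> dist p a * (dist q a + dist q b)"
    using ptolemy_inequality[of p q a b] assms(2) by (simp add: algebra_simps)
  also have "\<dots> \<le> dist p a * (2 / sqrt 3 * dist a b)"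
    using wide by (intro mult_left_mono) (simp_all add: pos_le_divide_eq mult.commute)
  also have "\<dots> = (2 / sqrt 3 * dist p a) * dist a b"
    by simp
  finally show ?thesis
    using ab by (rule mult_right_le_imp_le)
qed

end
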